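(* For $n\ge 6$, let $W_n$ be the wheel graph on $n$ vertices, i.e. the join of a cycle $C_{n-1}$ with a single vertex $c$ adjacent to all vertices of the cycle. Then $\mathcal{R}(W_n)=\frac{(n-3)(n^2+8)}{2(n-2)(4n-13)}$.
   Context: All graphs are finite, simple and connected, with at least two vertices; $d(u,v)$ denotes the shortest-path distance. $V_p$ denotes the set of all unordered pairs $(u,v)$ of distinct vertices. A vertex $x$ resolves the pair $(u,v)$ if $d(x,u)\neq d(x,v)$. For $(u,v)\in V_p$, $R(u,v)$ is the set of all vertices resolving $(u,v)$ (it always contains $u$ and $v$). The resolving share of a vertex $w$ for $(u,v)$ is $r_w(u,v)=\frac{1}{|R(u,v)|}$ if $w$ resolves $u$ and $v$, and $r_w(u,v)=0$ otherwise. For a vertex $w$, $R(w)$ is the set of pairs in $V_p$ resolved by $w$. The average resolving share of $w$ is $ar_w(G)=\frac{1}{|R(w)|}\sum_{(u,v)\in R(w)} r_w(u,v)$, and the resolving topological index of $G$ is $\mathcal{R}(G)=\sum_{w\in V(G)} ar_w(G)$. *)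

theory Defs
  imports Complex_Main
begin

definition gdist :: "'a set \<Rightarrow> ('a \<Rightarrow> 'a \<Rightarrow> bool) \<Rightarrow> 'a \<Rightarrow> 'a \<Rightarrow> nat" where
  "gdist V E u v = (LEAST k. \<exists>xs. length xs = Suc k \<and> hd xs = u \<and> last xs = v
                      \<and> set xs \<subseteq> V \<and> successively E xs)"

definition vpairs :: "'a set \<Rightarrow> 'a set set" where
  "vpairs V = {{u, v} | u v. u \<in> V \<and> v \<in> V \<and> u \<noteq> v}"

definition resolves :: "'a set \<Rightarrow> ('a \<Rightarrow> 'a \<Rightarrow> bool) \<Rightarrow> 'a \<Rightarrow> 'a set \<Rightarrow> bool" where
  "resolves V E x P = (\<exists>u v. P = {u, v} \<and> gdist V E x u \<noteq> gdist V E x v)"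

definition resolving_verts :: "'a set \<Rightarrow> ('a \<Rightarrow> 'a \<Rightarrow> bool) \<Rightarrow> 'a set \<Rightarrow> 'a set" where
  "resolving_verts V E P = {x \<in> V. resolves V E x P}"

definition rshare :: "'a set \<Rightarrow> ('a \<Rightarrow> 'a \<Rightarrow> bool) \<Rightarrow> 'a \<Rightarrow> 'a set \<Rightarrow> real" where
  "rshare V E w P = (if resolves V E w P then 1 / real (card (resolving_verts V E P)) else 0)"

definition resolved_pairs :: "'a set \<Rightarrow> ('a \<Rightarrow> 'a \<Rightarrow> bool) \<Rightarrow> 'a \<Rightarrow> 'a set set" where
  "resolved_pairs V E w = {P \<in> vpairs V. resolves V E w P}"

definition avg_rshare :: "'a set \<Rightarrow> ('a \<Rightarrow> 'a \<Rightarrow> bool) \<Rightarrow> 'a \<Rightarrow> real" where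
  "avg_rshare V E w = (1 / real (card (resolved_pairs V E w))) *
      (\<Sum>P\<in>resolved_pairs V E w. rshare V E w P)"

definition resolving_index :: "'a set \<Rightarrow> ('a \<Rightarrow> 'a \<Rightarrow> bool) \<Rightarrow> real" where
  "resolving_index V E = (\<Sum>w\<in>V. avg_rshare V E w)"

text \<open>Wheel graph W_n on vertices {0..<n}: 0 is the hub, 1..n-1 form the cycle C_{n-1}
  (i adjacent to i mod (n-1) + 1).\<close>
definition wheel_V :: "nat \<Rightarrow> nat set" where
  "wheel_V n = {0..<n}"

definition wheel_E :: "nat \<Rightarrow> nat \<Rightarrow> nat \<Rightarrow> bool" where
  "wheel_E n i j = (i \<noteq> j \<and> i < n \<and> j < n \<and>
     ((i = 0 \<and> j \<ge> 1) \<or> (j = 0 \<and> i \<ge> 1) \<or>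
      (i \<ge> 1 \<and> j \<ge> 1 \<and> (j = i mod (n - 1) + 1 \<or> i = j mod (n - 1) + 1))))"

end

theory Submission imports Defs begin

text \<open>Every pair of vertices is at distance 0, 1 or 2 in a wheel, so a vertex \<open>w\<close> resolves a
  pair exactly when its two vertices lie in different classes among \<open>{w}\<close>, \<open>N(w)\<close> and the rest. This gives
  \<open>|R(w)| = n - 1\<close> for the hub and \<open>|R(w)| = 4n - 13\<close> for a rim vertex, while a pair \<open>{0, i}\<close>
  containing the hub \<open>0\<close> is resolved by all vertices except the two rim neighbours of \<open>i\<close>, so the hub
  has share \<open>1/(n-2)\<close> for each of its \<open>n - 1\<close> pairs. Since the shares of each pair sum to 1,
  the rim vertices together carry share \<open>n(n-1)/2 - (n-1)/(n-2)\<close>, and the formula follows.\<close>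

lemma gdist_self: "u \<in> V \<Longrightarrow> gdist V E u u = 0"
  unfolding gdist_def by (rule Least_eq_0) (rule exI[of _ "[u]"], auto)

lemma hd_eq_last_if_length_1: "length xs = Suc 0 \<Longrightarrow> hd xs = last xs"
  by (cases xs) auto

lemma gdist_eq_1:
  assumes "u \<noteq> v" "u \<in> V" "v \<in> V" "E u v"
  shows "gdist V E u v = 1"
  unfolding gdist_def
proof (rule Least_equality)
  show "\<exists>xs. length xs = Suc 1 \<and> hd xs = u \<and> last xs = v \<and> set xs \<subseteq> V \<and> successively E xs"
    by (rule exI[of _ "[u, v]"]) (use assms in auto)
next
  fix k assume "\<exists>xs. length xs = Suc k \<and> hd xs = u \<and> last xs = v \<and> set xs \<subseteq> V \<and> successively E xs"
  then obtain xs where "length xs = Suc k" "hd xs = u" "last xs = v" by blast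
  then show "1 \<le> k"
    using hd_eq_last_if_length_1[of xs] \<open>u \<noteq> v\<close> by (cases k) auto
qed

lemma gdist_eq_2:
  assumes "u \<noteq> v" "u \<in> V" "v \<in> V" "c \<in> V" "\<not> E u v" "E u c" "E c v"
  shows "gdist V E u v = 2"
  unfolding gdist_def
proof (rule Least_equality)
  show "\<exists>xs. length xs = Suc 2 \<and> hd xs = u \<and> last xs = v \<and> set xs \<subseteq> V \<and> successively E xs"
    by (rule exI[of _ "[u, c, v]"]) (use assms in auto)
next
  fix k assume "\<exists>xs. length xs = Suc k \<and> hd xs = u \<and> last xs = v \<and> set xs \<subseteq> V \<and> successively E xs"
  then obtain xs where xs: "length xs = Suc k" "hd xs = u" "last xs = v" "successively E xs"
    by blast
  show "2 \<le> k"
  proof (rule ccontr)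
    assume "\<not> 2 \<le> k"
    then consider "k = 0" | "k = 1" by linarith
    then show False
    proof cases
      case 1
      with xs hd_eq_last_if_length_1[of xs] \<open>u \<noteq> v\<close> show False by simp
    next
      case 2
      with xs(1) obtain a b where "xs = [a, b]"
        by (metis One_nat_def length_0_conv length_Suc_conv)
      with xs \<open>\<not> E u v\<close> show False by simp
    qed
  qed
qed

lemma resolves_doubleton: "resolves V E x {u, v} \<longleftrightarrow> gdist V E x u \<noteq> gdist V E x v"
  unfolding resolves_def by (auto simp: doubleton_eq_iff)

lemma resolved_pairs_eq:
  "resolved_pairs V E w = {P \<in> vpairs V. \<exists>u v. P = {u, v} \<and> gdist V E w u \<noteq> gdist V E w v}"
  unfolding resolved_pairs_def resolves_def by simp

lemma finite_vpairs: "finite V \<Longrightarrow> finite (vpairs V)"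
  by (rule finite_subset[of _ "Pow V"]) (auto simp: vpairs_def)

lemma card_vpairs: "finite V \<Longrightarrow> card (vpairs V) = card V choose 2"
proof -
  assume "finite V"
  have "vpairs V = {B. B \<subseteq> V \<and> card B = 2}"
    unfolding vpairs_def card_2_iff by auto
  with n_subsets[OF \<open>finite V\<close>] show ?thesis by simp
qed

lemma card_pairs_separated:
  fixes f :: "'a \<Rightarrow> 'b::linorder"
  shows "card {P \<in> vpairs V. \<exists>u v. P = {u, v} \<and> f u \<noteq> f v}
       = card {(u, v). u \<in> V \<and> v \<in> V \<and> f u < f v}"
proof -
  let ?S = "{(u, v). u \<in> V \<and> v \<in> V \<and> f u < f v}"
  let ?T = "{P \<in> vpairs V. \<exists>u v. P = {u, v} \<and> f u \<noteq> f v}"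
  have "bij_betw (\<lambda>(u, v). {u, v}) ?S ?T"
  proof (rule bij_betw_imageI)
    show "inj_on (\<lambda>(u, v). {u, v}) ?S"
      by (auto simp: inj_on_def doubleton_eq_iff)
    show "(\<lambda>(u, v). {u, v}) ` ?S = ?T"
    proof
      show "(\<lambda>(u, v). {u, v}) ` ?S \<subseteq> ?T"
        by (force simp: vpairs_def)
      show "?T \<subseteq> (\<lambda>(u, v). {u, v}) ` ?S"
      proof
        fix P assume "P \<in> ?T"
        then obtain u v where P: "P = {u, v}" "f u \<noteq> f v" and "P \<in> vpairs V"
          by blast
        then have "u \<in> V" "v \<in> V"
          by (auto simp: vpairs_def doubleton_eq_iff)
        with P have "(u, v) \<in> ?S \<or> (v, u) \<in> ?S" by auto
        then show "P \<in> (\<lambda>(u, v). {u, v}) ` ?S"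
          using P(1) by (auto simp: image_iff insert_commute)
      qed
    qed
  qed
  then show ?thesis by (simp add: bij_betw_same_card)
qed

lemma sum_rshare_resolved_pairs:
  "finite V \<Longrightarrow> (\<Sum>P\<in>resolved_pairs V E w. rshare V E w P) = (\<Sum>P\<in>vpairs V. rshare V E w P)"
  by (rule sum.mono_neutral_left) (auto simp: finite_vpairs resolved_pairs_def rshare_def)

lemma sum_rshare_eq_1:
  assumes "finite V" "resolving_verts V E P \<noteq> {}"
  shows "(\<Sum>w\<in>V. rshare V E w P) = 1"
proof -
  let ?R = "resolving_verts V E P"
  have "finite ?R" using \<open>finite V\<close> by (simp add: resolving_verts_def)
  have "(\<Sum>w\<in>V. rshare V E w P) = (\<Sum>w\<in>?R. 1 / real (card ?R))"
    unfolding rshare_def resolving_verts_def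
    by (subst sum.inter_filter[symmetric]) (use \<open>finite V\<close> in simp_all)
  also have "\<dots> = 1"
    using \<open>finite ?R\<close> assms(2) by simp
  finally show ?thesis .
qed

lemma sum_sum_rshare:
  assumes "finite V" "\<And>P. P \<in> vpairs V \<Longrightarrow> resolving_verts V E P \<noteq> {}"
  shows "(\<Sum>w\<in>V. \<Sum>P\<in>vpairs V. rshare V E w P) = real (card (vpairs V))"
proof -
  have "(\<Sum>w\<in>V. \<Sum>P\<in>vpairs V. rshare V E w P) = (\<Sum>P\<in>vpairs V. \<Sum>w\<in>V. rshare V E w P)"
    by (rule sum.swap)
  also have "\<dots> = (\<Sum>P\<in>vpairs V. 1)"
    using sum_rshare_eq_1[OF \<open>finite V\<close> assms(2)] by simp
  finally show ?thesis by simp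
qed

definition wheel_succ :: "nat \<Rightarrow> nat \<Rightarrow> nat" where
  "wheel_succ n i = i mod (n - 1) + 1"

definition wheel_pred :: "nat \<Rightarrow> nat \<Rightarrow> nat" where
  "wheel_pred n i = (if i = 1 then n - 1 else i - 1)"

lemma wheel_E_commute: "wheel_E n i j = wheel_E n j i"
  unfolding wheel_E_def by auto

lemma mem_wheel_V: "x \<in> wheel_V n \<longleftrightarrow> x < n"
  by (simp add: wheel_V_def)

lemma mod_below_wheel_size: "(i::nat) < n \<Longrightarrow> i mod (n - 1) = (if i = n - 1 then 0 else i)"
  by auto

lemma finite_wheel_V: "finite (wheel_V n)"
  by (simp add: wheel_V_def)

lemma wheel_gdist:
  assumes "u < n" "v < n"
  shows "gdist (wheel_V n) (wheel_E n) u v = (if u = v then 0 else if wheel_E n u v then 1 else 2)"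
proof -
  have V: "u \<in> wheel_V n" "v \<in> wheel_V n" "0 \<in> wheel_V n"
    using assms by (auto simp: mem_wheel_V)
  consider "u = v" | "u \<noteq> v" "wheel_E n u v" | "u \<noteq> v" "\<not> wheel_E n u v" by blast
  then show ?thesis
  proof cases
    case 3
    then have "wheel_E n u 0" "wheel_E n 0 v"
      using assms unfolding wheel_E_def by auto
    with 3 V show ?thesis using gdist_eq_2[where c = 0] by simp
  qed (use V gdist_self gdist_eq_1 in simp_all)
qed

lemma wheel_gdist_commute:
  "u < n \<Longrightarrow> v < n \<Longrightarrow> gdist (wheel_V n) (wheel_E n) u v = gdist (wheel_V n) (wheel_E n) v u"
  by (simp add: wheel_gdist wheel_E_commute)

lemma wheel_gdist_hub:
  "v < n \<Longrightarrow> gdist (wheel_V n) (wheel_E n) 0 v = (if v = 0 then 0 else 1)"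
  by (simp add: wheel_gdist) (simp add: wheel_E_def)

lemma wheel_resolving_verts_nonempty:
  "P \<in> vpairs (wheel_V n) \<Longrightarrow> resolving_verts (wheel_V n) (wheel_E n) P \<noteq> {}"
  by (auto simp: vpairs_def resolving_verts_def resolves_doubleton mem_wheel_V wheel_gdist)

context
  fixes n :: nat
  assumes n_ge_4: "4 \<le> n"
begin

lemma wheel_E_rim_iff:
  assumes "1 \<le> i" "i < n" "x < n"
  shows "wheel_E n i x \<longleftrightarrow> x = 0 \<or> x = wheel_succ n i \<or> x = wheel_pred n i"
  using n_ge_4 assms mod_below_wheel_size[of i n] mod_below_wheel_size[of x n]
  unfolding wheel_E_def wheel_succ_def wheel_pred_def by (cases "x = 0") (auto split: if_splits)

lemma wheel_succ_pred:
  assumes "1 \<le> i" "i < n"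
  shows "1 \<le> wheel_succ n i" "wheel_succ n i < n" "1 \<le> wheel_pred n i" "wheel_pred n i < n"
    "wheel_succ n i \<noteq> wheel_pred n i" "wheel_succ n i \<noteq> i" "wheel_pred n i \<noteq> i"
  using n_ge_4 assms mod_below_wheel_size[of i n] by (auto simp: wheel_succ_def wheel_pred_def)

lemma wheel_gdist_rim:
  assumes "1 \<le> w" "w < n" "v < n"
  shows "gdist (wheel_V n) (wheel_E n) w v =
    (if v = w then 0 else if v \<in> {0, wheel_succ n w, wheel_pred n w} then 1 else 2)"
  using assms by (auto simp: wheel_gdist wheel_E_rim_iff)

lemma card_resolved_pairs_hub: "card (resolved_pairs (wheel_V n) (wheel_E n) 0) = n - 1"
proof -
  have "{(u, v). u \<in> wheel_V n \<and> v \<in> wheel_V n \<and>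
          gdist (wheel_V n) (wheel_E n) 0 u < gdist (wheel_V n) (wheel_E n) 0 v}
      = {0} \<times> ({0..<n} - {0})"
    using n_ge_4 by (auto simp: mem_wheel_V wheel_gdist_hub split: if_splits)
  then show ?thesis
    unfolding resolved_pairs_eq card_pairs_separated using n_ge_4 by simp
qed

lemma card_resolved_pairs_rim:
  assumes w: "1 \<le> w" "w < n"
  shows "card (resolved_pairs (wheel_V n) (wheel_E n) w) = 4 * n - 13"
proof -
  let ?N = "{0, wheel_succ n w, wheel_pred n w}"
  note sp = wheel_succ_pred[OF w]
  have "{(u, v). u \<in> wheel_V n \<and> v \<in> wheel_V n \<and>
          gdist (wheel_V n) (wheel_E n) w u < gdist (wheel_V n) (wheel_E n) w v}
      = {w} \<times> ({0..<n} - {w}) \<union> ?N \<times> ({0..<n} - insert w ?N)"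
    using w sp by (auto simp: mem_wheel_V wheel_gdist_rim split: if_splits)
  moreover have "card ({0..<n} - insert w ?N) = n - 4"
    using sp w by (subst card_Diff_subset) auto
  moreover have "card ?N = 3" "card ({0..<n} - {w}) = n - 1"
    using sp w by auto
  moreover have "({w} \<times> ({0..<n} - {w})) \<inter> (?N \<times> ({0..<n} - insert w ?N)) = {}"
    using sp w by auto
  ultimately have "card (resolved_pairs (wheel_V n) (wheel_E n) w) = (n - 1) + 3 * (n - 4)"
    unfolding resolved_pairs_eq card_pairs_separated
    by (simp add: card_Un_disjoint card_cartesian_product)
  then show ?thesis
    using n_ge_4 by simp
qed

lemma card_resolving_verts_hub_pair:
  assumes i: "1 \<le> i" "i < n"
  shows "card (resolving_verts (wheel_V n) (wheel_E n) {0, i}) = n - 2"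
proof -
  note sp = wheel_succ_pred[OF i]
  have "gdist (wheel_V n) (wheel_E n) x 0 = (if x = 0 then 0 else 1)"
    and "gdist (wheel_V n) (wheel_E n) x i =
      (if x = i then 0 else if x \<in> {0, wheel_succ n i, wheel_pred n i} then 1 else 2)"
    if "x < n" for x
    using that i wheel_gdist_commute[of x n] by (simp_all add: wheel_gdist_hub wheel_gdist_rim)
  then have "resolving_verts (wheel_V n) (wheel_E n) {0, i} = {0..<n} - {wheel_succ n i, wheel_pred n i}"
    using sp i by (auto simp: resolving_verts_def resolves_doubleton mem_wheel_V split: if_splits)
  moreover have "card {wheel_succ n i, wheel_pred n i} = 2"
    using sp by simp
  ultimately show ?thesis
    using sp by (simp add: card_Diff_subset)
qed

lemma sum_rshare_hub:
  "(\<Sum>P\<in>vpairs (wheel_V n). rshare (wheel_V n) (wheel_E n) 0 P) = real (n - 1) / real (n - 2)"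
proof -
  have "(\<Sum>P\<in>vpairs (wheel_V n). rshare (wheel_V n) (wheel_E n) 0 P)
     = (\<Sum>P\<in>resolved_pairs (wheel_V n) (wheel_E n) 0. 1 / real (n - 2))"
    unfolding sum_rshare_resolved_pairs[symmetric, OF finite_wheel_V]
  proof (rule sum.cong[OF refl])
    fix P assume P: "P \<in> resolved_pairs (wheel_V n) (wheel_E n) 0"
    then obtain u v where uv: "P = {u, v}"
      "gdist (wheel_V n) (wheel_E n) 0 u \<noteq> gdist (wheel_V n) (wheel_E n) 0 v"
      unfolding resolved_pairs_eq by blast
    moreover have "u < n" "v < n"
      using P uv(1) by (auto simp: resolved_pairs_def vpairs_def mem_wheel_V doubleton_eq_iff)
    ultimately obtain i where "1 \<le> i" "i < n" "P = {0, i}"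
    proof (cases "u = 0")
      case True
      with uv \<open>v < n\<close> show ?thesis
        using that[of v] by (simp add: wheel_gdist_hub split: if_splits)
    next
      case False
      with uv \<open>u < n\<close> \<open>v < n\<close> show ?thesis
        using that[of u] by (auto simp: wheel_gdist_hub insert_commute split: if_splits)
    qed
    then show "rshare (wheel_V n) (wheel_E n) 0 P = 1 / real (n - 2)"
      using P card_resolving_verts_hub_pair by (simp add: rshare_def resolved_pairs_def)
  qed
  then show ?thesis
    using card_resolved_pairs_hub by simp
qed

lemma avg_rshare_hub: "avg_rshare (wheel_V n) (wheel_E n) 0 = 1 / real (n - 2)"
  using n_ge_4 by (simp add: avg_rshare_def sum_rshare_resolved_pairs[OF finite_wheel_V]
      card_resolved_pairs_hub sum_rshare_hub)

lemma avg_rshare_rim: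
  "1 \<le> w \<Longrightarrow> w < n \<Longrightarrow> avg_rshare (wheel_V n) (wheel_E n) w
    = (\<Sum>P\<in>vpairs (wheel_V n). rshare (wheel_V n) (wheel_E n) w P) / real (4 * n - 13)"
  by (simp add: avg_rshare_def sum_rshare_resolved_pairs[OF finite_wheel_V] card_resolved_pairs_rim)

lemma sum_rshare_rim:
  "(\<Sum>w\<in>{1..<n}. \<Sum>P\<in>vpairs (wheel_V n). rshare (wheel_V n) (wheel_E n) w P)
    = real n * (real n - 1) / 2 - real (n - 1) / real (n - 2)"
proof -
  have "real (card (vpairs (wheel_V n))) = real n * (real n - 1) / 2"
    using card_vpairs[OF finite_wheel_V] n_ge_4
    by (auto simp: wheel_V_def choose_two real_of_nat_div mod_eq_0_iff_dvd of_nat_diff)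
  moreover have "wheel_V n = insert 0 {1..<n}"
    using n_ge_4 by (auto simp: wheel_V_def)
  ultimately show ?thesis
    using sum_sum_rshare[OF finite_wheel_V wheel_resolving_verts_nonempty, of n] sum_rshare_hub
    by simp
qed

end

theorem theorem3p11:
  fixes n :: nat
  assumes "n \<ge> 6"
  shows "resolving_index (wheel_V n) (wheel_E n) =
    (real n - 3) * ((real n)^2 + 8) / (2 * (real n - 2) * (4 * real n - 13))"
proof -
  have n: "4 \<le> n" using assms by simp
  have "resolving_index (wheel_V n) (wheel_E n)
      = avg_rshare (wheel_V n) (wheel_E n) 0 + (\<Sum>w\<in>{1..<n}. avg_rshare (wheel_V n) (wheel_E n) w)"
    unfolding resolving_index_def using n by (simp add: wheel_V_def sum.atLeast_Suc_lessThan)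
  also have "\<dots> = 1 / (real n - 2)
      + (real n * (real n - 1) / 2 - (real n - 1) / (real n - 2)) / (4 * real n - 13)"
    using n avg_rshare_hub[OF n] avg_rshare_rim[OF n] sum_rshare_rim[OF n]
    by (simp add: sum_divide_distrib[symmetric] of_nat_diff)
  also have "\<dots> = (real n - 3) * ((real n)^2 + 8) / (2 * (real n - 2) * (4 * real n - 13))"
  proof -
    have "x - 2 \<noteq> 0 \<Longrightarrow> 4 * x - 13 \<noteq> 0 \<Longrightarrow>
        1 / (x - 2) + (x * (x - 1) / 2 - (x - 1) / (x - 2)) / (4 * x - 13)
      = (x - 3) * (x^2 + 8) / (2 * (x - 2) * (4 * x - 13))" for x :: real
      by (simp add: divide_simps) (simp add: algebra_simps power2_eq_square)
    then show ?thesis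
      using n by simp
  qed
  finally show ?thesis .
qed

end
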